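(* Let $n,m,M$ be positive integers, $A_1,\dots,A_M\in\mathbb{R}^{n\times n}$, $B\in\mathbb{R}^{n\times m}$, $\mathcal{M}=\{1,\dots,M\}$. Given $N\in\mathbb{Z}^+$ and $\omega_N\subset\mathbb{S}\times\mathcal{M}$ with $N$ elements, let $\gamma(\omega_N)$, $P(\omega_N)$, $K(\omega_N)$ be the output of Algorithm 1 (described in the context) run on $\omega_N$, $B$ and some tolerance $\epsilon_{tol}>0$. Suppose $\omega_N$ is an $\epsilon$-covering of $\mathbb{S}\times\mathcal{M}$ for some $\epsilon\in(0,1)$. Then $$\rho(\mathcal{A}_{K(\omega_N)})\le\frac{\gamma(\omega_N)}{1-\kappa(P(\omega_N))\bigl(1-\cos(\delta^{-1}(\epsilon))\bigr)},$$ with the convention that if $\kappa(P(\omega_N))(1-\cos(\delta^{-1}(\epsilon)))\ge1$, the right-hand side is $+\infty$.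
   Context: $\mathbb{S}$ is the unit sphere in $\mathbb{R}^n$ and $\mu$ the uniform probability measure on $\mathbb{S}$. For $x\in\mathbb{S}$, $\theta\in[0,\pi/2]$, $\mathrm{Cap}(x,\theta)=\{v\in\mathbb{S}:|x^\top v|\ge\cos\theta\}$ and $\delta(\theta)=\mu(\mathrm{Cap}(x,\theta))$; $\delta$ is strictly increasing from $[0,\pi/2]$ onto $[0,1]$ with inverse $\delta^{-1}$. Given $\epsilon\in(0,1)$ and $\theta=\delta^{-1}(\epsilon)$, a set $\omega\subset\mathbb{S}\times\mathcal{M}$ is an $\epsilon$-covering of $\mathbb{S}\times\mathcal{M}$ if for every $(x,\sigma)\in\mathbb{S}\times\mathcal{M}$ there exists $z\in\mathbb{S}$ with $(z,\sigma)\in\omega$ and $|z^\top x|\ge\cos\theta$. For $P\succ0$, $\kappa(P)=\lambda_{\max}(P)/\lambda_{\min}(P)$. For $K\in\mathbb{R}^{m\times n}$, $\mathcal{A}_K=\{A_1+BK,\dots,A_M+BK\}$ and $\rho(\mathcal{A}_K)=\lim_{k\to\infty}\max_{(\sigma_0,\dots,\sigma_{k-1})\in\mathcal{M}^k}\|(A_{\sigma_{k-1}}+BK)\cdots(A_{\sigma_0}+BK)\|^{1/k}$ is its joint spectral radius. Algorithm 1 (uses only $B$, the points $x$ and the successors $A_\sigma x$ for $(x,\sigma)\in\omega_N$): define Problem (K-step) for fixed $P$: minimize $\gamma\ge0$ over $(\gamma,K)$ subject to $\begin{pmatrix}\gamma^2x^\top Px & (A_\sigma x+BKx)^\top P\\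 P(A_\sigma x+BKx) & P\end{pmatrix}\succeq0$ for all $(x,\sigma)\in\omega_N$. Define Problem (P-step) for fixed $K$: minimize $\gamma\ge0$ over $(\gamma,P)$ subject to $(A_\sigma x+BKx)^\top P(A_\sigma x+BKx)\le\gamma^2x^\top Px$ for all $(x,\sigma)\in\omega_N$ and $P\succeq I$. Initialize $k=0$, $P_0=I_n$, and $(K_0,\gamma_0)$ a solution of (K-step) with $P=P_0$. Iterate: obtain $P_{k+1}$ from (P-step) with $K=K_k$; obtain $(K_{k+1},\gamma_{k+1})$ from (K-step) with $P=P_{k+1}$; if $|\gamma_{k+1}-\gamma_k|<\epsilon_{tol}$, output $\gamma(\omega_N)=\gamma_{k+1}$, $P(\omega_N)=P_{k+1}$, $K(\omega_N)=K_{k+1}$ and stop; otherwise set $k\leftarrow k+1$ and repeat. *)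

theory Defs
  imports "HOL-Analysis.Analysis"
begin

definition unit_sphere :: "(real^'n) set" where
  "unit_sphere = {x. norm x = 1}"

text \<open>Uniform probability measure on the sphere (cone measure: normalized
  Lebesgue measure of the cone over the set, inside the unit ball).\<close>
definition sphere_mu :: "(real^'n) set \<Rightarrow> real" where
  "sphere_mu S = measure lborel {y. y \<in> ball 0 1 \<and> y \<noteq> 0 \<and> (y /\<^sub>R norm y) \<in> S}
                 / measure lborel (ball (0::real^'n) 1)"

definition Cap :: "real^'n \<Rightarrow> real \<Rightarrow> (real^'n) set" where
  "Cap x \<theta> = {v \<in> unit_sphere. \<bar>x \<bullet> v\<bar> \<ge> cos \<theta>}"

text \<open>delta(theta) = mu(Cap(x,theta)); independent of the unit vector x, we fix one.\<close>
definition cap_delta :: "'n::finite itself \<Rightarrow> real \<Rightarrow> real" where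
  "cap_delta _ \<theta> = sphere_mu (Cap (SOME e::real^'n. norm e = 1) \<theta>)"

definition cap_delta_inv :: "'n::finite itself \<Rightarrow> real \<Rightarrow> real" where
  "cap_delta_inv t \<epsilon> = (THE \<theta>. \<theta> \<in> {0..pi/2} \<and> cap_delta t \<theta> = \<epsilon>)"

definition eps_covering ::
  "((real^'n) \<times> nat) set \<Rightarrow> nat \<Rightarrow> real \<Rightarrow> bool" where
  "eps_covering \<omega> M \<epsilon> \<longleftrightarrow>
     (\<forall>x\<in>unit_sphere. \<forall>\<sigma>\<in>{1..M}. \<exists>z\<in>unit_sphere. (z, \<sigma>) \<in> \<omega> \<and>
        \<bar>z \<bullet> x\<bar> \<ge> cos (cap_delta_inv TYPE('n) \<epsilon>))"

definition eigenvalues :: "real^'n^'n \<Rightarrow> real set" where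
  "eigenvalues P = {l. \<exists>v. v \<noteq> 0 \<and> P *v v = l *\<^sub>R v}"

definition kappa :: "real^'n^'n \<Rightarrow> real" where
  "kappa P = Max (eigenvalues P) / Min (eigenvalues P)"

fun mat_prod_seq :: "(nat \<Rightarrow> real^'n^'n) \<Rightarrow> nat list \<Rightarrow> real^'n^'n" where
  "mat_prod_seq F [] = mat 1"
| "mat_prod_seq F (s # ss) = mat_prod_seq F ss ** F s"

definition jsr :: "nat \<Rightarrow> (nat \<Rightarrow> real^'n^'n) \<Rightarrow> real" where
  "jsr M F = lim (\<lambda>k. Max {onorm (\<lambda>v. mat_prod_seq F ss *v v) powr (1 / real k) | ss.
                             ss \<in> lists {1..M} \<and> length ss = k})"

definition closed_loop :: "(nat \<Rightarrow> real^'n^'n) \<Rightarrow> real^'m^'n \<Rightarrow> real^'n^'m \<Rightarrow> nat \<Rightarrow> real^'n^'n" where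
  "closed_loop A B K \<sigma> = A \<sigma> + B ** K"

text \<open>Problem (K-step) feasibility: gamma >= 0 and the block matrix
  [[gamma^2 x'Px, v'P],[Pv, P]] is PSD (written out as its quadratic form in (t,y)),
  where v = A_sigma x + B K x.\<close>
definition feasK :: "((real^'n) \<times> nat) set \<Rightarrow> (nat \<Rightarrow> real^'n^'n) \<Rightarrow> real^'m^'n
    \<Rightarrow> real^'n^'n \<Rightarrow> real \<Rightarrow> real^'n^'m \<Rightarrow> bool" where
  "feasK \<omega> A B P \<gamma> K \<longleftrightarrow> \<gamma> \<ge> 0 \<and>
     (\<forall>(x, \<sigma>)\<in>\<omega>. \<forall>(t::real) (y::real^'n).
        let v = A \<sigma> *v x + B *v (K *v x) in
        0 \<le> t\<^sup>2 * \<gamma>\<^sup>2 * (x \<bullet> (P *v x)) + 2 * t * (v \<bullet> (P *v y)) + y \<bullet> (P *v y))"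

definition optK :: "((real^'n) \<times> nat) set \<Rightarrow> (nat \<Rightarrow> real^'n^'n) \<Rightarrow> real^'m^'n
    \<Rightarrow> real^'n^'n \<Rightarrow> real \<Rightarrow> real^'n^'m \<Rightarrow> bool" where
  "optK \<omega> A B P \<gamma> K \<longleftrightarrow> feasK \<omega> A B P \<gamma> K \<and> (\<forall>\<gamma>' K'. feasK \<omega> A B P \<gamma>' K' \<longrightarrow> \<gamma> \<le> \<gamma>')"

definition psd_ge_I :: "real^'n^'n \<Rightarrow> bool" where
  "psd_ge_I P \<longleftrightarrow> transpose P = P \<and> (\<forall>x. 0 \<le> x \<bullet> ((P - mat 1) *v x))"

definition feasP :: "((real^'n) \<times> nat) set \<Rightarrow> (nat \<Rightarrow> real^'n^'n) \<Rightarrow> real^'m^'n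
    \<Rightarrow> real^'n^'m \<Rightarrow> real \<Rightarrow> real^'n^'n \<Rightarrow> bool" where
  "feasP \<omega> A B K \<gamma> P \<longleftrightarrow> \<gamma> \<ge> 0 \<and> psd_ge_I P \<and>
     (\<forall>(x, \<sigma>)\<in>\<omega>. let v = A \<sigma> *v x + B *v (K *v x) in
        v \<bullet> (P *v v) \<le> \<gamma>\<^sup>2 * (x \<bullet> (P *v x)))"

definition optP :: "((real^'n) \<times> nat) set \<Rightarrow> (nat \<Rightarrow> real^'n^'n) \<Rightarrow> real^'m^'n
    \<Rightarrow> real^'n^'m \<Rightarrow> real \<Rightarrow> real^'n^'n \<Rightarrow> bool" where
  "optP \<omega> A B K \<gamma> P \<longleftrightarrow> feasP \<omega> A B K \<gamma> P \<and> (\<forall>\<gamma>' P'. feasP \<omega> A B K \<gamma>' P' \<longrightarrow> \<gamma> \<le> \<gamma>')"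

text \<open>(gamma, P, K) is an output of Algorithm 1 (some run, with solvers returning
  optimal solutions) on omega with tolerance tol.\<close>
definition algorithm1_output :: "((real^'n) \<times> nat) set \<Rightarrow> (nat \<Rightarrow> real^'n^'n) \<Rightarrow> real^'m^'n
    \<Rightarrow> real \<Rightarrow> real \<Rightarrow> real^'n^'n \<Rightarrow> real^'n^'m \<Rightarrow> bool" where
  "algorithm1_output \<omega> A B tol \<gamma> P K \<longleftrightarrow>
    (\<exists>Ps Ks gs (k::nat) (hs::nat \<Rightarrow> real).
       Ps 0 = mat 1 \<and> optK \<omega> A B (Ps 0) (gs 0) (Ks 0) \<and>
       (\<forall>j\<le>k. optP \<omega> A B (Ks j) (hs j) (Ps (Suc j)) \<and>
               optK \<omega> A B (Ps (Suc j)) (gs (Suc j)) (Ks (Suc j))) \<and>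
       (\<forall>j<k. \<bar>gs (Suc j) - gs j\<bar> \<ge> tol) \<and>
       \<bar>gs (Suc k) - gs k\<bar> < tol \<and>
       \<gamma> = gs (Suc k) \<and> P = Ps (Suc k) \<and> K = Ks (Suc k))"

end

theory Submission
  imports Defs
begin

text \<open>
  Let \<open>P \<ge> I\<close> and let \<open>F = A\<^sub>\<sigma> + BK\<close>. The \<open>P\<close>-operator norm \<open>L\<close> of \<open>F\<close> is attained
  at a unit vector \<open>x\<^sub>0\<close>, and maximality makes \<open>x\<^sub>0\<close> a generalised eigenvector,
  \<open>F\<^sup>T P F x\<^sub>0 = L\<^sup>2 P x\<^sub>0\<close>; hence \<open>F\<close> maps the \<open>P\<close>-orthogonal complement of \<open>x\<^sub>0\<close>
  \<open>P\<close>-orthogonally to \<open>F x\<^sub>0\<close>. The covering supplies a sample \<open>z\<close> with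
  \<open>z \<bullet> x\<^sub>0 \<ge> cos \<theta>\<close> (after a sign change) which the K-step constraint contracts,
  \<open>\<parallel>F z\<parallel>\<^sub>P \<le> \<gamma> \<parallel>z\<parallel>\<^sub>P\<close>. Projecting \<open>z\<close> onto \<open>x\<^sub>0\<close> gives
  \<open>L\<^sup>2 \<langle>z, x\<^sub>0\<rangle>\<^sub>P\<^sup>2 \<le> \<gamma>\<^sup>2 \<parallel>z\<parallel>\<^sub>P\<^sup>2 \<parallel>x\<^sub>0\<parallel>\<^sub>P\<^sup>2\<close>, while
  \<open>\<parallel>z - x\<^sub>0\<parallel>\<^sub>P\<^sup>2 \<le> 2 \<lambda>\<^sub>m\<^sub>a\<^sub>x (1 - cos \<theta>)\<close> forces
  \<open>2 \<langle>z, x\<^sub>0\<rangle>\<^sub>P \<ge> (\<parallel>z\<parallel>\<^sub>P\<^sup>2 + \<parallel>x\<^sub>0\<parallel>\<^sub>P\<^sup>2)(1 - \<kappa>(P)(1 - cos \<theta>))\<close>; with AM-GM this yields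
  \<open>L \<le> \<gamma> / (1 - \<kappa>(P)(1 - cos \<theta>)) =: R\<close>. So every product of \<open>k\<close> closed-loop matrices has
  Euclidean norm at most \<open>\<surd>\<kappa>(P) R\<^sup>k\<close>, and the joint spectral radius, whose defining
  limit exists by Fekete's lemma, is at most \<open>R\<close>.
\<close>

section \<open>Quadratic forms\<close>

definition quad_form :: "real^'n^'n \<Rightarrow> real^'n \<Rightarrow> real" where
  "quad_form P y = y \<bullet> (P *v y)"

lemma inner_transpose_matrix_vector:
  fixes A :: "real^'n^'m"
  shows "x \<bullet> (transpose A *v v) = (A *v x) \<bullet> v"
  by (metis dot_lmul_matrix inner_commute transpose_matrix_vector)

lemma inner_symmetric_matrix_vector:
  fixes P :: "real^'n^'n"
  assumes "transpose P = P"
  shows "x \<bullet> (P *v y) = y \<bullet> (P *v x)"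
  using inner_transpose_matrix_vector[of x P y] assms by (simp add: inner_commute)

lemma transpose_diff: "transpose (A - B :: real^'n^'m) = transpose A - transpose B"
  by (simp add: transpose_def vec_eq_iff)

lemma quad_form_scaleR: "quad_form P (c *\<^sub>R y) = c\<^sup>2 * quad_form P y"
  by (simp add: quad_form_def matrix_scaleR_vector_ac scaleR_matrix_vector_assoc[symmetric]
      power2_eq_square)

lemma quad_form_uminus: "quad_form P (- y) = quad_form P y"
  using quad_form_scaleR[of P "-1" y] by simp

lemma quad_form_add:
  assumes "transpose P = P"
  shows "quad_form P (x + y) = quad_form P x + 2 * (y \<bullet> (P *v x)) + quad_form P y"
  using inner_symmetric_matrix_vector[OF assms, of x y]
  by (simp add: quad_form_def matrix_vector_right_distrib inner_add_left inner_add_right)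

lemma quad_form_diff_matrix: "quad_form (P - Q) y = quad_form P y - quad_form Q y"
  by (simp add: quad_form_def matrix_vector_mult_diff_rdistrib inner_diff_right)

lemma quad_form_scaleR_matrix: "quad_form (c *\<^sub>R P) y = c * quad_form P y"
  by (simp add: quad_form_def scaleR_matrix_vector_assoc[symmetric])

lemma quad_form_mat_1: "quad_form (mat 1) y = (norm y)\<^sup>2"
  by (simp add: quad_form_def matrix_vector_mul_lid power2_norm_eq_inner)

lemma inner_congruence:
  fixes F :: "real^'n^'m" and P :: "real^'m^'m"
  shows "x \<bullet> ((transpose F ** P ** F) *v y) = (F *v x) \<bullet> (P *v (F *v y))"
proof -
  have "x \<bullet> ((transpose F ** P ** F) *v y) = x \<bullet> (transpose F *v (P *v (F *v y)))"
    by (simp add: matrix_vector_mul_assoc matrix_mul_assoc)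
  also have "\<dots> = (F *v x) \<bullet> (P *v (F *v y))"
    by (rule inner_transpose_matrix_vector)
  finally show ?thesis .
qed

lemma quad_form_congruence:
  fixes F :: "real^'n^'m" and P :: "real^'m^'m"
  shows "quad_form (transpose F ** P ** F) y = quad_form P (F *v y)"
  unfolding quad_form_def by (rule inner_congruence)

lemma continuous_on_quad_form: "continuous_on S (quad_form P)"
  unfolding quad_form_def by (intro continuous_intros linear_continuous_on matrix_vector_mul_linear)

lemma quad_form_le_if_le_on_sphere:
  assumes "\<And>y. norm y = 1 \<Longrightarrow> quad_form Q y \<le> quad_form P y"
  shows "quad_form Q y \<le> quad_form P y"
proof (cases "y = 0")
  case True
  then show ?thesis by (simp add: quad_form_def)
next
  case False
  have "quad_form Q ((1 / norm y) *\<^sub>R y) \<le> quad_form P ((1 / norm y) *\<^sub>R y)"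
    using assms False by simp
  then show ?thesis
    using False by (simp add: quad_form_scaleR)
qed

lemma exists_max_on_unit_sphere:
  fixes f :: "real^'n \<Rightarrow> real"
  assumes "continuous_on (sphere 0 1) f"
  obtains x where "norm x = 1" "\<And>y. norm y = 1 \<Longrightarrow> f y \<le> f x"
  using continuous_attains_sup[OF compact_sphere _ assms] sphere_eq_empty[of "0::real^'n" 1]
  by fastforce

lemma nonneg_quadratic_imp_linear_coeff_zero:
  fixes a b :: real
  assumes "\<And>t. 0 \<le> 2 * t * b + t\<^sup>2 * a"
  shows "b = 0"
proof -
  have a: "a \<ge> 0"
    using assms[of 1] assms[of "-1"] by simp
  define t where "t = - b / (a + 1)"
  have "0 \<le> 2 * t * b + t * (t * a)"
    using assms[of t] by (simp add: power2_eq_square)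
  also have "t * a = - b - t"
    using a unfolding t_def by (simp add: field_simps)
  finally have "t\<^sup>2 \<le> t * b"
    by (simp add: power2_eq_square algebra_simps)
  also have "t * b \<le> 0"
    using a unfolding t_def by (simp add: divide_le_0_iff mult_le_0_iff)
  finally have "t = 0"
    by simp
  then show ?thesis
    using a unfolding t_def by simp
qed

lemma psd_quad_form_zero_imp_null:
  assumes "transpose S = S" "\<And>y. 0 \<le> quad_form S y" "quad_form S x = 0"
  shows "S *v x = 0"
proof -
  have "w \<bullet> (S *v x) = 0" for w
  proof (rule nonneg_quadratic_imp_linear_coeff_zero)
    fix t
    show "0 \<le> 2 * t * (w \<bullet> (S *v x)) + t\<^sup>2 * quad_form S w"
      using assms(2)[of "x + t *\<^sub>R w"] assms(3)
      by (simp add: quad_form_add[OF assms(1)] quad_form_scaleR matrix_vector_mult_scaleR)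
  qed
  from this[of "S *v x"] show ?thesis
    by simp
qed

lemma quad_form_touching_point:
  assumes "transpose P = P" "transpose Q = Q"
    and "\<And>y. quad_form Q y \<le> quad_form P y" "quad_form Q x = quad_form P x"
  shows "Q *v x = P *v x"
proof -
  have "(P - Q) *v x = 0"
    using assms by (intro psd_quad_form_zero_imp_null) (simp_all add: transpose_diff quad_form_diff_matrix)
  then show ?thesis
    by (simp add: matrix_vector_mult_diff_rdistrib)
qed

section \<open>Spectral bounds for symmetric matrices\<close>

lemma matrix_vector_mult_uminus_left:
  fixes P :: "real^'n^'m"
  shows "(- P) *v x = - (P *v x)"
  by (simp add: matrix_vector_mult_def vec_eq_iff sum_negf[symmetric])

lemma eigenvalues_uminus: "eigenvalues (- P) = uminus ` eigenvalues P"
proof -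
  have "- (P *v v) = l *\<^sub>R v \<longleftrightarrow> P *v v = (- l) *\<^sub>R v" for v l
    by (metis minus_minus scaleR_minus_left)
  then have "l \<in> eigenvalues (- P) \<longleftrightarrow> - l \<in> eigenvalues P" for l
    unfolding eigenvalues_def by (simp add: matrix_vector_mult_uminus_left)
  then show ?thesis
    by (force intro: image_eqI[of _ uminus "- _"])
qed

lemma finite_eigenvalues_symmetric:
  fixes P :: "real^'n^'n"
  assumes "transpose P = P"
  shows "finite (eigenvalues P)"
proof -
  define v where "v l = (SOME v. v \<noteq> 0 \<and> P *v v = l *\<^sub>R v)" for l
  have v: "v l \<noteq> 0" "P *v v l = l *\<^sub>R v l" if "l \<in> eigenvalues P" for l
    using that someI_ex[of "\<lambda>v. v \<noteq> 0 \<and> P *v v = l *\<^sub>R v"]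
    unfolding eigenvalues_def v_def by auto
  have orth: "v l \<bullet> v l' = 0" if "l \<in> eigenvalues P" "l' \<in> eigenvalues P" "l \<noteq> l'" for l l'
  proof -
    have "l' * (v l \<bullet> v l') = v l \<bullet> (P *v v l')"
      using v(2)[OF that(2)] by simp
    also have "\<dots> = v l' \<bullet> (P *v v l)"
      by (rule inner_symmetric_matrix_vector[OF assms])
    also have "\<dots> = l * (v l \<bullet> v l')"
      using v(2)[OF that(1)] by (simp add: inner_commute)
    finally show ?thesis
      using that(3) by simp
  qed
  have inj: "inj_on v (eigenvalues P)"
    using orth v(1) by (metis inj_onI inner_eq_zero_iff)
  have "independent (v ` eigenvalues P)"
    using orth v(1) inj
    by (intro pairwise_orthogonal_independent) (auto simp: pairwise_def orthogonal_def inj_on_eq_iff)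
  then have "finite (v ` eigenvalues P)"
    using independent_bound by blast
  then show ?thesis
    using inj finite_imageD by blast
qed

lemma symmetric_quad_form_le_eigenvalue:
  fixes P :: "real^'n^'n"
  assumes "transpose P = P"
  obtains m where "m \<in> eigenvalues P" "\<And>y. quad_form P y \<le> m * (norm y)\<^sup>2"
proof -
  obtain x where x: "norm x = 1" "\<And>y. norm y = 1 \<Longrightarrow> quad_form P y \<le> quad_form P x"
    using exists_max_on_unit_sphere[OF continuous_on_quad_form] by blast
  define m where "m = quad_form P x"
  have le: "quad_form P y \<le> quad_form (m *\<^sub>R mat 1) y" for y
    by (rule quad_form_le_if_le_on_sphere) (simp add: x quad_form_scaleR_matrix quad_form_mat_1 m_def)
  have "P *v x = (m *\<^sub>R mat 1) *v x"
    using le x(1) assms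
    by (intro quad_form_touching_point)
       (simp_all add: transpose_scalar transpose_mat quad_form_scaleR_matrix quad_form_mat_1 m_def)
  then have "m \<in> eigenvalues P"
    using x(1) unfolding eigenvalues_def
    by (auto intro!: exI[of _ x] simp: scaleR_matrix_vector_assoc[symmetric] matrix_vector_mul_lid)
  then show ?thesis
    using le that by (simp add: quad_form_scaleR_matrix quad_form_mat_1)
qed

lemma symmetric_eigenvalue_le_quad_form:
  fixes P :: "real^'n^'n"
  assumes "transpose P = P"
  obtains m where "m \<in> eigenvalues P" "\<And>y. m * (norm y)\<^sup>2 \<le> quad_form P y"
proof -
  have "transpose (- P) = - P"
    by (metis assms scaleR_minus1_left transpose_scalar)
  then obtain m where m: "m \<in> eigenvalues (- P)" "\<And>y. quad_form (- P) y \<le> m * (norm y)\<^sup>2"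
    using symmetric_quad_form_le_eigenvalue by blast
  have "quad_form (- P) y = - quad_form P y" for y
    by (simp add: quad_form_def matrix_vector_mult_uminus_left)
  then have "- m * (norm y)\<^sup>2 \<le> quad_form P y" for y
    using m(2)[of y] by simp
  moreover have "- m \<in> eigenvalues P"
    using m(1) by (force simp: eigenvalues_uminus)
  ultimately show ?thesis
    using that by blast
qed

lemma eigenvalue_ge_1:
  assumes "psd_ge_I P" "l \<in> eigenvalues P"
  shows "l \<ge> 1"
proof -
  obtain v where v: "v \<noteq> 0" "P *v v = l *\<^sub>R v"
    using assms(2) unfolding eigenvalues_def by auto
  have "0 \<le> quad_form (P - mat 1) v"
    using assms(1) unfolding psd_ge_I_def quad_form_def by auto
  also have "\<dots> = (l - 1) * (norm v)\<^sup>2"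
    using v(2) by (simp add: quad_form_diff_matrix quad_form_mat_1 quad_form_def
        power2_norm_eq_inner algebra_simps)
  finally show ?thesis
    using v(1) by (simp add: zero_le_mult_iff)
qed

lemma psd_ge_I_eigenvalue_bounds:
  fixes P :: "real^'n^'n"
  assumes "psd_ge_I P"
  shows "1 \<le> Min (eigenvalues P)" "Min (eigenvalues P) \<le> Max (eigenvalues P)"
    and "quad_form P y \<le> Max (eigenvalues P) * (norm y)\<^sup>2"
    and "Min (eigenvalues P) * (norm y)\<^sup>2 \<le> quad_form P y"
proof -
  have sym: "transpose P = P"
    using assms unfolding psd_ge_I_def by auto
  have fin: "finite (eigenvalues P)"
    by (rule finite_eigenvalues_symmetric[OF sym])
  obtain m1 where m1: "m1 \<in> eigenvalues P" "\<And>y. quad_form P y \<le> m1 * (norm y)\<^sup>2"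
    using symmetric_quad_form_le_eigenvalue[OF sym] by blast
  obtain m2 where m2: "m2 \<in> eigenvalues P" "\<And>y. m2 * (norm y)\<^sup>2 \<le> quad_form P y"
    using symmetric_eigenvalue_le_quad_form[OF sym] by blast
  have ne: "eigenvalues P \<noteq> {}"
    using m1 by auto
  show "1 \<le> Min (eigenvalues P)"
    using eigenvalue_ge_1[OF assms] Min_in[OF fin ne] by blast
  show "Min (eigenvalues P) \<le> Max (eigenvalues P)"
    using Min_le[OF fin m1(1)] Max_ge[OF fin m1(1)] by linarith
  show "quad_form P y \<le> Max (eigenvalues P) * (norm y)\<^sup>2"
    using m1(2)[of y] Max_ge[OF fin m1(1)] by (meson mult_right_mono order_trans zero_le_power2)
  show "Min (eigenvalues P) * (norm y)\<^sup>2 \<le> quad_form P y"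
    using m2(2)[of y] Min_le[OF fin m2(1)] by (meson mult_right_mono order_trans zero_le_power2)
qed

lemma kappa_ge_1: "psd_ge_I P \<Longrightarrow> 1 \<le> kappa P"
  using psd_ge_I_eigenvalue_bounds(1,2)[of P] by (simp add: kappa_def)

section \<open>Contraction from a covering\<close>

lemma psd_ge_I_quad_form_ge:
  assumes "psd_ge_I P"
  shows "(norm y)\<^sup>2 \<le> quad_form P y"
proof -
  have "0 \<le> quad_form (P - mat 1) y"
    using assms unfolding psd_ge_I_def quad_form_def by blast
  then show ?thesis
    by (simp add: quad_form_diff_matrix quad_form_mat_1)
qed

lemma psd_ge_I_quad_form_nonneg: "psd_ge_I P \<Longrightarrow> 0 \<le> quad_form P y"
  by (rule order_trans[OF zero_le_power2 psd_ge_I_quad_form_ge])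

lemma symmetric_congruence:
  fixes P F :: "real^'n^'n"
  assumes "transpose P = P"
  shows "transpose (transpose F ** P ** F) = transpose F ** P ** F"
  using assms by (simp add: matrix_transpose_mul matrix_mul_assoc)

lemma induced_gain_attained:
  fixes P F :: "real^'n^'n"
  assumes "psd_ge_I P"
  obtains x0 g where "norm x0 = 1" "0 \<le> g"
    and "\<And>y. quad_form P (F *v y) \<le> g * quad_form P y"
    and "(transpose F ** P ** F) *v x0 = g *\<^sub>R (P *v x0)"
proof -
  have sym: "transpose P = P"
    using assms unfolding psd_ge_I_def by auto
  have pos: "0 < quad_form P y" if "norm y = 1" for y
    using psd_ge_I_quad_form_ge[OF assms, of y] that by simp
  define ratio where "ratio y = quad_form (transpose F ** P ** F) y / quad_form P y" for y
  have "continuous_on (sphere 0 1) ratio"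
    unfolding ratio_def
    by (intro continuous_on_divide continuous_on_quad_form) (use pos in fastforce)
  then obtain x0 where x0: "norm x0 = 1" "\<And>y. norm y = 1 \<Longrightarrow> ratio y \<le> ratio x0"
    using exists_max_on_unit_sphere by blast
  define g where "g = ratio x0"
  have "0 \<le> quad_form (transpose F ** P ** F) x0"
    unfolding quad_form_congruence by (rule psd_ge_I_quad_form_nonneg[OF assms])
  then have "0 \<le> g"
    using pos[OF x0(1)] unfolding g_def ratio_def by simp
  have le: "quad_form (transpose F ** P ** F) y \<le> quad_form (g *\<^sub>R P) y" for y
  proof (rule quad_form_le_if_le_on_sphere)
    fix y :: "real^'n"
    assume "norm y = 1"
    then show "quad_form (transpose F ** P ** F) y \<le> quad_form (g *\<^sub>R P) y"
      using x0(2)[of y] pos[of y] unfolding g_def ratio_def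
      by (simp add: quad_form_scaleR_matrix pos_divide_le_eq)
  qed
  have "(transpose F ** P ** F) *v x0 = (g *\<^sub>R P) *v x0"
    using le pos[OF x0(1)]
    by (intro quad_form_touching_point)
       (simp_all add: sym symmetric_congruence transpose_scalar quad_form_scaleR_matrix g_def ratio_def)
  then show ?thesis
    using that x0(1) \<open>0 \<le> g\<close> le
    by (simp add: quad_form_congruence quad_form_scaleR_matrix scaleR_matrix_vector_assoc)
qed

lemma generalized_eigenvector_projection_bound:
  fixes P F :: "real^'n^'n"
  assumes "psd_ge_I P" "0 < quad_form P x0" "0 \<le> g"
    and eig: "(transpose F ** P ** F) *v x0 = g *\<^sub>R (P *v x0)"
  shows "g * (z \<bullet> (P *v x0))\<^sup>2 \<le> quad_form P (F *v z) * quad_form P x0"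
proof -
  have sym: "transpose P = P"
    using assms(1) unfolding psd_ge_I_def by auto
  define qx where "qx = quad_form P x0"
  define p where "p = z \<bullet> (P *v x0)"
  define \<alpha> where "\<alpha> = p / qx"
  define w where "w = z - \<alpha> *\<^sub>R x0"
  have cross: "(F *v v) \<bullet> (P *v (F *v x0)) = g * (v \<bullet> (P *v x0))" for v
    using inner_congruence[of v F P x0] eig by simp
  have "w \<bullet> (P *v x0) = 0"
    using assms(2) unfolding w_def \<alpha>_def p_def qx_def by (simp add: inner_diff_left quad_form_def)
  then have "(\<alpha> *\<^sub>R (F *v x0)) \<bullet> (P *v (F *v w)) = 0"
    using cross[of w] inner_symmetric_matrix_vector[OF sym, of "F *v x0" "F *v w"] by simp
  moreover have "F *v z = F *v w + \<alpha> *\<^sub>R (F *v x0)"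
    unfolding w_def by (simp add: matrix_vector_right_distrib matrix_vector_mult_diff_distrib
        matrix_vector_mult_scaleR)
  moreover have "quad_form P (F *v x0) = g * qx"
    using cross[of x0] unfolding quad_form_def qx_def .
  ultimately have "quad_form P (F *v z) = quad_form P (F *v w) + \<alpha>\<^sup>2 * (g * qx)"
    by (simp add: quad_form_add[OF sym] quad_form_scaleR)
  moreover have "0 \<le> quad_form P (F *v w)"
    by (rule psd_ge_I_quad_form_nonneg[OF assms(1)])
  ultimately have "\<alpha>\<^sup>2 * (g * qx) * qx \<le> quad_form P (F *v z) * qx"
    using assms(2) unfolding qx_def by (intro mult_right_mono) auto
  also have "\<alpha>\<^sup>2 * (g * qx) * qx = g * p\<^sup>2"
    using assms(2) unfolding \<alpha>_def qx_def by (simp add: power2_eq_square field_simps)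
  finally show ?thesis
    unfolding p_def qx_def .
qed

lemma psd_ge_I_inner_lower_bound:
  fixes P :: "real^'n^'n"
  assumes P: "psd_ge_I P" and unit: "norm z = 1" "norm x = 1" and c: "c \<le> z \<bullet> x" "c \<le> 1"
  shows "(quad_form P z + quad_form P x) * (1 - kappa P * (1 - c)) \<le> 2 * (z \<bullet> (P *v x))"
proof -
  define lmin where "lmin = Min (eigenvalues P)"
  define lmax where "lmax = Max (eigenvalues P)"
  have sym: "transpose P = P"
    using P unfolding psd_ge_I_def by auto
  have lmin_unit: "lmin \<le> quad_form P v" if "norm v = 1" for v
    using psd_ge_I_eigenvalue_bounds(4)[OF P, of v] that unfolding lmin_def by simp
  have lmin: "1 \<le> lmin" "lmin \<le> quad_form P z" "lmin \<le> quad_form P x"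
    using psd_ge_I_eigenvalue_bounds(1)[OF P] lmin_unit unit unfolding lmin_def by auto
  have lmax: "lmax = kappa P * lmin"
    using lmin(1) unfolding kappa_def lmax_def lmin_def by simp
  have k: "0 \<le> kappa P * (1 - c)"
    using kappa_ge_1[OF P] c(2) by simp
  have "quad_form P z + quad_form P x - 2 * (z \<bullet> (P *v x)) = quad_form P (z - x)"
    using quad_form_add[OF sym, of z "- x"] inner_symmetric_matrix_vector[OF sym, of x z]
    by (simp add: quad_form_uminus vec.neg)
  also have "\<dots> \<le> lmax * (norm (z - x))\<^sup>2"
    using psd_ge_I_eigenvalue_bounds(3)[OF P] unfolding lmax_def by simp
  also have "(norm (z - x))\<^sup>2 = 2 * (1 - z \<bullet> x)"
    using unit by (simp add: power2_norm_eq_inner inner_diff inner_commute norm_eq_1)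
  also have "lmax * (2 * (1 - z \<bullet> x)) \<le> 2 * lmin * (kappa P * (1 - c))"
  proof -
    have "0 \<le> kappa P * lmin"
      using kappa_ge_1[OF P] lmin(1) by simp
    then have "kappa P * lmin * (2 * (1 - z \<bullet> x)) \<le> kappa P * lmin * (2 * (1 - c))"
      using c(1) by (intro mult_left_mono) auto
    then show ?thesis
      unfolding lmax by (simp add: mult_ac)
  qed
  also have "\<dots> \<le> (quad_form P z + quad_form P x) * (kappa P * (1 - c))"
    using lmin k by (intro mult_right_mono) auto
  finally show ?thesis
    by (simp add: algebra_simps)
qed

lemma gain_le_of_projection_bound:
  fixes g \<gamma> D a b p :: real
  assumes "0 \<le> g" "0 < D" "0 < a" "0 < b"
    and "(a + b) * D \<le> 2 * p" "g * p\<^sup>2 \<le> \<gamma>\<^sup>2 * (a * b)"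
  shows "g \<le> (\<gamma> / D)\<^sup>2"
proof -
  have "((a + b) * D)\<^sup>2 \<le> (2 * p)\<^sup>2"
    using assms by (intro power_mono) auto
  then have "g * ((a + b) * D)\<^sup>2 \<le> g * (2 * p)\<^sup>2"
    using assms(1) by (rule mult_left_mono)
  also have "\<dots> \<le> 4 * \<gamma>\<^sup>2 * (a * b)"
    using assms(6) by (simp add: power2_eq_square)
  also have "\<dots> \<le> \<gamma>\<^sup>2 * (a + b)\<^sup>2"
  proof -
    have "4 * (a * b) \<le> (a + b)\<^sup>2"
      using zero_le_power2[of "a - b"] by (simp add: power2_eq_square algebra_simps)
    then show ?thesis
      using mult_left_mono[of "4 * (a * b)" "(a + b)\<^sup>2" "\<gamma>\<^sup>2"] by simp
  qed
  finally have "(g * D\<^sup>2) * (a + b)\<^sup>2 \<le> \<gamma>\<^sup>2 * (a + b)\<^sup>2"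
    by (simp add: power_mult_distrib mult_ac)
  then have "g * D\<^sup>2 \<le> \<gamma>\<^sup>2"
    using assms(3,4) by simp
  then show ?thesis
    using assms(2) by (simp add: power_divide pos_le_divide_eq)
qed

lemma quad_form_contraction_of_covering:
  fixes P F :: "real^'n^'n"
  assumes P: "psd_ge_I P" and D: "0 < 1 - kappa P * (1 - c)" and "c \<le> 1"
    and cover: "\<And>x. norm x = 1 \<Longrightarrow>
      \<exists>z. norm z = 1 \<and> quad_form P (F *v z) \<le> \<gamma>\<^sup>2 * quad_form P z \<and> c \<le> \<bar>z \<bullet> x\<bar>"
  shows "quad_form P (F *v y) \<le> (\<gamma> / (1 - kappa P * (1 - c)))\<^sup>2 * quad_form P y"
proof -
  obtain x0 g where x0: "norm x0 = 1" and "0 \<le> g"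
    and gain: "\<And>y. quad_form P (F *v y) \<le> g * quad_form P y"
    and eig: "(transpose F ** P ** F) *v x0 = g *\<^sub>R (P *v x0)"
    using induced_gain_attained[OF P] by blast
  obtain z0 where z0: "norm z0 = 1" "quad_form P (F *v z0) \<le> \<gamma>\<^sup>2 * quad_form P z0"
    "c \<le> \<bar>z0 \<bullet> x0\<bar>"
    using cover[OF x0] by blast
  define z where "z = (if 0 \<le> z0 \<bullet> x0 then z0 else - z0)"
  have z: "norm z = 1" "quad_form P (F *v z) \<le> \<gamma>\<^sup>2 * quad_form P z" "c \<le> z \<bullet> x0"
    using z0 unfolding z_def by (auto simp: quad_form_uminus vec.neg)
  have pos: "1 \<le> quad_form P z" "1 \<le> quad_form P x0"
    using psd_ge_I_quad_form_ge[OF P] z(1) x0 by (metis power_one)+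
  have "g * (z \<bullet> (P *v x0))\<^sup>2 \<le> quad_form P (F *v z) * quad_form P x0"
    using pos by (intro generalized_eigenvector_projection_bound[OF P _ \<open>0 \<le> g\<close> eig]) auto
  also have "\<dots> \<le> \<gamma>\<^sup>2 * (quad_form P z * quad_form P x0)"
    using z(2) pos by (simp add: mult_right_mono)
  finally have "g \<le> (\<gamma> / (1 - kappa P * (1 - c)))\<^sup>2"
    using pos D psd_ge_I_inner_lower_bound[OF P z(1) x0 z(3) \<open>c \<le> 1\<close>]
    by (intro gain_le_of_projection_bound[OF \<open>0 \<le> g\<close>]) auto
  then show ?thesis
    using gain[of y] psd_ge_I_quad_form_nonneg[OF P, of y] by (meson mult_right_mono order_trans)
qed

section \<open>Submultiplicative sequences\<close>

lemma tendsto_powr_inverse_nat: "0 < E \<Longrightarrow> (\<lambda>k. E powr (1 / real k)) \<longlonglongrightarrow> 1"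
  using tendsto_powr[OF tendsto_const lim_1_over_n, of E] by simp

lemma powr_inverse_nat_power:
  fixes \<beta> :: real
  assumes "0 \<le> \<beta>" "1 \<le> k"
  shows "(\<beta> ^ k) powr (1 / real k) = \<beta>"
  using assms by (cases "\<beta> = 0") (simp_all add: powr_realpow[symmetric] powr_powr)

lemma power_powr_inverse_nat:
  fixes x :: real
  assumes "0 \<le> x" "1 \<le> k"
  shows "(x powr (1 / real k)) ^ k = x"
  using assms by (cases "x = 0") (simp_all add: powr_realpow[symmetric] powr_powr)

lemma root_le_of_geometric_bound:
  fixes u E \<beta> :: real
  assumes "0 \<le> u" "u \<le> E * \<beta> ^ k" "0 \<le> E" "0 \<le> \<beta>" "1 \<le> k"
  shows "u powr (1 / real k) \<le> E powr (1 / real k) * \<beta>"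
proof -
  have "u powr (1 / real k) \<le> (E * \<beta> ^ k) powr (1 / real k)"
    using assms(1,2) by (rule powr_mono2[rotated]) simp
  also have "\<dots> = E powr (1 / real k) * \<beta>"
    using assms(3-5) by (simp add: powr_mult powr_inverse_nat_power)
  finally show ?thesis .
qed

lemma submultiplicative_le_power:
  fixes u :: "nat \<Rightarrow> real"
  assumes nonneg: "\<And>k. 0 \<le> u k" and submult: "\<And>k l. u (k + l) \<le> u k * u l"
  shows "u (r + q * m) \<le> u r * u m ^ q"
proof (induction q)
  case (Suc q)
  have "u (r + Suc q * m) \<le> u (r + q * m) * u m"
    using submult[of "r + q * m" m] by (simp add: algebra_simps)
  also have "\<dots> \<le> u r * u m ^ q * u m"
    using Suc nonneg by (intro mult_right_mono) auto
  finally show ?case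
    by (simp add: mult_ac)
qed simp

lemma submultiplicative_geometric_bound:
  fixes u :: "nat \<Rightarrow> real"
  assumes nonneg: "\<And>k. 0 \<le> u k" and submult: "\<And>k l. u (k + l) \<le> u k * u l"
    and "0 < \<beta>" "1 \<le> m" "u m \<le> \<beta> ^ m"
  obtains E where "0 < E" "\<And>k. u k \<le> E * \<beta> ^ k"
proof -
  define C where "C = Max (u ` {..<m})"
  have C: "u r \<le> C" if "r < m" for r
    unfolding C_def using that by (intro Max_ge) auto
  have "0 \<le> C"
    using C[of 0] nonneg[of 0] \<open>1 \<le> m\<close> by simp
  define E where "E = (C + 1) * (max 1 (1 / \<beta>)) ^ m"
  have "u k \<le> E * \<beta> ^ k" for k
  proof -
    define q r where "q = k div m" and "r = k mod m"
    have k: "k = r + q * m" and "r < m"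
      using \<open>1 \<le> m\<close> unfolding q_def r_def by simp_all
    have "u k \<le> u r * u m ^ q"
      unfolding k by (rule submultiplicative_le_power[OF nonneg submult])
    also have "\<dots> \<le> (C + 1) * (\<beta> ^ m) ^ q"
      using C[OF \<open>r < m\<close>] \<open>0 \<le> C\<close> nonneg assms(5) by (intro mult_mono power_mono) auto
    also have "\<dots> = (C + 1) * (1 / \<beta>) ^ r * \<beta> ^ k"
      using \<open>0 < \<beta>\<close> unfolding k by (simp add: power_add power_mult power_divide mult_ac)
    also have "\<dots> \<le> E * \<beta> ^ k"
    proof -
      have "(1 / \<beta>) ^ r \<le> (max 1 (1 / \<beta>)) ^ r"
        using \<open>0 < \<beta>\<close> by (intro power_mono) auto
      also have "\<dots> \<le> (max 1 (1 / \<beta>)) ^ m"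
        using \<open>r < m\<close> by (intro power_increasing) auto
      finally show ?thesis
        unfolding E_def using \<open>0 \<le> C\<close> \<open>0 < \<beta>\<close> by (intro mult_right_mono mult_left_mono) auto
    qed
    finally show ?thesis .
  qed
  moreover have "0 < E"
    unfolding E_def using \<open>0 \<le> C\<close> by simp
  ultimately show ?thesis
    using that by blast
qed

lemma convergent_root_of_submultiplicative:
  fixes u :: "nat \<Rightarrow> real"
  assumes nonneg: "\<And>k. 0 \<le> u k" and submult: "\<And>k l. u (k + l) \<le> u k * u l"
  shows "convergent (\<lambda>k. u k powr (1 / real k))"
proof -
  define b where "b k = u k powr (1 / real k)" for k
  define \<rho> where "\<rho> = (INF k\<in>{1..}. b k)"
  have bdd: "bdd_below (b ` {1..})"
    unfolding b_def by (intro bdd_belowI[of _ 0]) auto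
  have \<rho>_le: "\<rho> \<le> b k" if "1 \<le> k" for k
    unfolding \<rho>_def using that bdd by (intro cINF_lower) auto
  have "b \<longlonglongrightarrow> \<rho>"
  proof (rule order_tendstoI)
    fix a
    assume "a < \<rho>"
    then show "\<forall>\<^sub>F k in sequentially. a < b k"
      using \<rho>_le eventually_sequentially less_le_trans by metis
  next
    fix a
    assume "\<rho> < a"
    then obtain m where m: "1 \<le> m" "b m < (\<rho> + a) / 2"
      using cINF_less_iff[OF _ bdd, of "(\<rho> + a) / 2"] unfolding \<rho>_def by auto
    define \<beta> where "\<beta> = (b m + a) / 2"
    have "0 \<le> b m"
      unfolding b_def by simp
    then have "0 < \<beta>"
      using \<open>\<rho> < a\<close> \<rho>_le[OF m(1)] m(2) unfolding \<beta>_def by simp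
    have "\<beta> < a"
      using \<open>\<rho> < a\<close> \<rho>_le[OF m(1)] m(2) unfolding \<beta>_def by simp
    have "u m = b m ^ m"
      unfolding b_def using power_powr_inverse_nat[OF nonneg m(1)] by simp
    also have "\<dots> \<le> \<beta> ^ m"
      using \<open>0 \<le> b m\<close> \<open>\<beta> < a\<close> m(2) \<rho>_le[OF m(1)] unfolding \<beta>_def
      by (intro power_mono) auto
    finally obtain E where E: "0 < E" "\<And>k. u k \<le> E * \<beta> ^ k"
      using submultiplicative_geometric_bound[OF nonneg submult \<open>0 < \<beta>\<close> m(1)] by blast
    have "(\<lambda>k. E powr (1 / real k) * \<beta>) \<longlonglongrightarrow> 1 * \<beta>"
      by (intro tendsto_mult tendsto_const tendsto_powr_inverse_nat E(1))
    then have "\<forall>\<^sub>F k in sequentially. E powr (1 / real k) * \<beta> < a"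
      using \<open>\<beta> < a\<close> by (simp add: order_tendstoD(2))
    moreover have "\<forall>\<^sub>F k in sequentially. b k \<le> E powr (1 / real k) * \<beta>"
      unfolding b_def eventually_sequentially
      using root_le_of_geometric_bound[OF nonneg E(2)] E(1) \<open>0 < \<beta>\<close> by auto
    ultimately show "\<forall>\<^sub>F k in sequentially. b k < a"
      by eventually_elim simp
  qed
  then show ?thesis
    unfolding b_def by (rule convergentI)
qed

section \<open>Joint spectral radius\<close>

lemma mat_prod_seq_append: "mat_prod_seq F (xs @ ys) = mat_prod_seq F ys ** mat_prod_seq F xs"
  by (induction xs) (simp_all add: matrix_mul_assoc)

definition switching_words :: "nat \<Rightarrow> nat \<Rightarrow> nat list set" where
  "switching_words M k = {ss. ss \<in> lists {1..M} \<and> length ss = k}"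

definition max_prod_norm :: "nat \<Rightarrow> (nat \<Rightarrow> real^'n^'n) \<Rightarrow> nat \<Rightarrow> real" where
  "max_prod_norm M F k =
     Max ((\<lambda>ss. onorm (\<lambda>v. mat_prod_seq F ss *v v)) ` switching_words M k)"

lemma finite_switching_words: "finite (switching_words M k)"
  unfolding switching_words_def lists_eq_set using finite_lists_length_eq[of "{1..M}" k] by simp

lemma switching_words_nonempty: "1 \<le> M \<Longrightarrow> switching_words M k \<noteq> {}"
  unfolding switching_words_def by (auto intro!: exI[of _ "replicate k 1"])

lemma onorm_mat_prod_seq_nonneg: "0 \<le> onorm (\<lambda>v. mat_prod_seq F ss *v v)"
  by (rule onorm_pos_le) (rule matrix_vector_mul_bounded_linear)

lemma onorm_mat_prod_seq_le_max_prod_norm: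
  "ss \<in> switching_words M k \<Longrightarrow> onorm (\<lambda>v. mat_prod_seq F ss *v v) \<le> max_prod_norm M F k"
  unfolding max_prod_norm_def using finite_switching_words by (intro Max_ge) auto

lemma max_prod_norm_nonneg: "1 \<le> M \<Longrightarrow> 0 \<le> max_prod_norm M F k"
  using switching_words_nonempty onorm_mat_prod_seq_nonneg onorm_mat_prod_seq_le_max_prod_norm
  by (meson ex_in_conv order_trans)

lemma max_prod_norm_submult:
  assumes "1 \<le> M"
  shows "max_prod_norm M F (k + l) \<le> max_prod_norm M F k * max_prod_norm M F l"
proof -
  have "onorm (\<lambda>v. mat_prod_seq F ss *v v) \<le> max_prod_norm M F k * max_prod_norm M F l"
    if ss: "ss \<in> switching_words M (k + l)" for ss
  proof -
    have "take k ss \<in> switching_words M k" "drop k ss \<in> switching_words M l"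
      using ss unfolding switching_words_def by (auto dest: in_set_takeD in_set_dropD)
    have comp: "(\<lambda>v. mat_prod_seq F ss *v v) =
        (\<lambda>v. mat_prod_seq F (drop k ss) *v v) \<circ> (\<lambda>v. mat_prod_seq F (take k ss) *v v)"
      using mat_prod_seq_append[of F "take k ss" "drop k ss"]
      by (simp add: o_def matrix_vector_mul_assoc)
    have "onorm (\<lambda>v. mat_prod_seq F ss *v v) \<le>
        onorm (\<lambda>v. mat_prod_seq F (drop k ss) *v v) * onorm (\<lambda>v. mat_prod_seq F (take k ss) *v v)"
      unfolding comp by (intro onorm_compose matrix_vector_mul_bounded_linear)
    also have "\<dots> \<le> max_prod_norm M F l * max_prod_norm M F k"
      using onorm_mat_prod_seq_le_max_prod_norm max_prod_norm_nonneg[OF assms]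
        \<open>take k ss \<in> switching_words M k\<close> \<open>drop k ss \<in> switching_words M l\<close>
      by (intro mult_mono onorm_mat_prod_seq_nonneg) auto
    finally show ?thesis
      by (simp add: mult.commute)
  qed
  then show ?thesis
    unfolding max_prod_norm_def[of M F "k + l"]
    using finite_switching_words switching_words_nonempty[OF assms] by (simp add: Max_le_iff)
qed

lemma jsr_eq_lim_max_prod_norm:
  assumes "1 \<le> M"
  shows "jsr M F = lim (\<lambda>k. max_prod_norm M F k powr (1 / real k))"
proof -
  have "Max {onorm (\<lambda>v. mat_prod_seq F ss *v v) powr (1 / real k) | ss.
        ss \<in> lists {1..M} \<and> length ss = k} = max_prod_norm M F k powr (1 / real k)" for k
  proof -
    define f where "f a = (max 0 a) powr (1 / real k)" for a :: real
    define X where "X = (\<lambda>ss. onorm (\<lambda>v. mat_prod_seq F ss *v v)) ` switching_words M k"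
    have "mono f"
      unfolding f_def by (intro monoI powr_mono2) auto
    have "{onorm (\<lambda>v. mat_prod_seq F ss *v v) powr (1 / real k) | ss.
        ss \<in> lists {1..M} \<and> length ss = k} =
        (\<lambda>ss. onorm (\<lambda>v. mat_prod_seq F ss *v v) powr (1 / real k)) ` switching_words M k"
      unfolding switching_words_def by (rule setcompr_eq_image)
    also have "\<dots> = f ` X"
      unfolding X_def image_image f_def by (simp add: onorm_mat_prod_seq_nonneg max_absorb2)
    also have "Max (f ` X) = f (Max X)"
      unfolding X_def
      using mono_Max_commute[OF \<open>mono f\<close>] finite_switching_words switching_words_nonempty[OF assms]
      by (metis finite_imageI image_is_empty)
    also have "\<dots> = max_prod_norm M F k powr (1 / real k)"
      unfolding f_def X_def max_prod_norm_def[symmetric]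
      using max_prod_norm_nonneg[OF assms, of F k] by (simp add: max_def)
    finally show ?thesis .
  qed
  then show ?thesis
    unfolding jsr_def by simp
qed

lemma jsr_le_of_geometric_bound:
  assumes "1 \<le> M" "0 < C" "0 \<le> R"
    and bound: "\<And>ss. ss \<in> lists {1..M} \<Longrightarrow> onorm (\<lambda>v. mat_prod_seq F ss *v v) \<le> C * R ^ length ss"
  shows "jsr M F \<le> R"
proof -
  define u where "u k = max_prod_norm M F k" for k
  have u: "0 \<le> u k" "u k \<le> C * R ^ k" for k
    using max_prod_norm_nonneg[OF assms(1)] bound finite_switching_words switching_words_nonempty[OF assms(1)]
    unfolding u_def max_prod_norm_def switching_words_def by (auto simp: Max_le_iff)
  \<comment> \<open>\<open>jsr\<close> is defined by \<open>lim\<close>, which says nothing unless the sequence converges.\<close>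
  have "convergent (\<lambda>k. u k powr (1 / real k))"
    unfolding u_def using max_prod_norm_nonneg[OF assms(1)] max_prod_norm_submult[OF assms(1)]
    by (rule convergent_root_of_submultiplicative)
  moreover have "(\<lambda>k. C powr (1 / real k) * R) \<longlonglongrightarrow> 1 * R"
    by (intro tendsto_mult tendsto_const tendsto_powr_inverse_nat assms(2))
  moreover have "u k powr (1 / real k) \<le> C powr (1 / real k) * R" if "1 \<le> k" for k
    using u assms(2,3) that by (intro root_le_of_geometric_bound) auto
  ultimately have "lim (\<lambda>k. u k powr (1 / real k)) \<le> 1 * R"
    by (intro LIMSEQ_le[of "\<lambda>k. u k powr (1 / real k)" _ "\<lambda>k. C powr (1 / real k) * R"])
       (auto simp: convergent_LIMSEQ_iff)
  then show ?thesis
    unfolding jsr_eq_lim_max_prod_norm[OF assms(1), of F] u_def by simp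
qed

lemma quad_form_mat_prod_seq_le:
  assumes step: "\<And>\<sigma> y. \<sigma> \<in> {1..M} \<Longrightarrow> quad_form P (F \<sigma> *v y) \<le> R\<^sup>2 * quad_form P y"
  shows "ss \<in> lists {1..M} \<Longrightarrow> quad_form P (mat_prod_seq F ss *v y) \<le> (R\<^sup>2) ^ length ss * quad_form P y"
proof (induction ss arbitrary: y)
  case (Cons s ss)
  have "quad_form P (mat_prod_seq F (s # ss) *v y) = quad_form P (mat_prod_seq F ss *v (F s *v y))"
    by (simp add: matrix_vector_mul_assoc)
  also have "\<dots> \<le> (R\<^sup>2) ^ length ss * quad_form P (F s *v y)"
    using Cons by simp
  also have "\<dots> \<le> (R\<^sup>2) ^ length ss * (R\<^sup>2 * quad_form P y)"
    using step[of s y] Cons.prems by (intro mult_left_mono) auto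
  finally show ?case
    by (simp add: mult_ac)
qed (simp add: matrix_vector_mul_lid)

lemma onorm_mat_prod_seq_le:
  assumes P: "psd_ge_I P" and "0 \<le> R"
    and step: "\<And>\<sigma> y. \<sigma> \<in> {1..M} \<Longrightarrow> quad_form P (F \<sigma> *v y) \<le> R\<^sup>2 * quad_form P y"
    and ss: "ss \<in> lists {1..M}"
  shows "onorm (\<lambda>v. mat_prod_seq F ss *v v) \<le> sqrt (kappa P) * R ^ length ss"
proof (rule onorm_le)
  fix y
  define lmin where "lmin = Min (eigenvalues P)"
  define lmax where "lmax = Max (eigenvalues P)"
  have "1 \<le> lmin"
    unfolding lmin_def by (rule psd_ge_I_eigenvalue_bounds(1)[OF P])
  have "lmin * (norm (mat_prod_seq F ss *v y))\<^sup>2 \<le> (R\<^sup>2) ^ length ss * quad_form P y"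
    using psd_ge_I_eigenvalue_bounds(4)[OF P] quad_form_mat_prod_seq_le[OF step ss]
    unfolding lmin_def by (rule order_trans)
  also have "\<dots> \<le> (R\<^sup>2) ^ length ss * (lmax * (norm y)\<^sup>2)"
    using psd_ge_I_eigenvalue_bounds(3)[OF P] unfolding lmax_def by (simp add: mult_left_mono)
  also have "\<dots> = lmin * (sqrt (kappa P) * R ^ length ss * norm y)\<^sup>2"
  proof -
    have "(R\<^sup>2) ^ length ss = (R ^ length ss)\<^sup>2"
      by (metis mult.commute power_mult)
    moreover have "lmax = kappa P * lmin"
      using \<open>1 \<le> lmin\<close> unfolding kappa_def lmin_def lmax_def by simp
    moreover have "(sqrt (kappa P))\<^sup>2 = kappa P"
      using kappa_ge_1[OF P] by simp
    ultimately show ?thesis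
      by (simp add: power_mult_distrib)
  qed
  finally have "(norm (mat_prod_seq F ss *v y))\<^sup>2 \<le> (sqrt (kappa P) * R ^ length ss * norm y)\<^sup>2"
    using \<open>1 \<le> lmin\<close> by simp
  then show "norm (mat_prod_seq F ss *v y) \<le> sqrt (kappa P) * R ^ length ss * norm y"
  proof (rule power2_le_imp_le)
    show "0 \<le> sqrt (kappa P) * R ^ length ss * norm y"
      using \<open>0 \<le> R\<close> kappa_ge_1[OF P] by simp
  qed
qed

lemma jsr_le_of_quad_form_contraction:
  assumes "1 \<le> M" "psd_ge_I P" "0 \<le> R"
    and "\<And>\<sigma> y. \<sigma> \<in> {1..M} \<Longrightarrow> quad_form P (F \<sigma> *v y) \<le> R\<^sup>2 * quad_form P y"
  shows "jsr M F \<le> R"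
  using assms kappa_ge_1[OF assms(2)]
  by (intro jsr_le_of_geometric_bound[where C = "sqrt (kappa P)"] onorm_mat_prod_seq_le) auto

section \<open>Algorithm 1\<close>

lemma feasK_contraction:
  assumes "feasK \<omega> A B P \<gamma> K" "(x, \<sigma>) \<in> \<omega>"
  shows "quad_form P (closed_loop A B K \<sigma> *v x) \<le> \<gamma>\<^sup>2 * quad_form P x"
proof -
  \<comment> \<open>Schur complement: test the block-matrix constraint at \<open>(t, y) = (1, -v)\<close>.\<close>
  define v where "v = A \<sigma> *v x + B *v (K *v x)"
  have v: "closed_loop A B K \<sigma> *v x = v"
    unfolding v_def closed_loop_def by (simp add: matrix_vector_mult_add_rdistrib matrix_vector_mul_assoc)
  have "0 \<le> 1\<^sup>2 * \<gamma>\<^sup>2 * (x \<bullet> (P *v x)) + 2 * 1 * (v \<bullet> (P *v (- v))) + (- v) \<bullet> (P *v (- v))"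
    using assms unfolding feasK_def v_def Let_def by fast
  then show ?thesis
    unfolding v quad_form_def by (simp add: vec.neg)
qed

lemma eps_covering_feasK_contracted_point:
  fixes x :: "real^'n"
  assumes "eps_covering \<omega> M \<epsilon>" "feasK \<omega> A B P \<gamma> K" "\<sigma> \<in> {1..M}" "norm x = 1"
  shows "\<exists>z. norm z = 1 \<and> quad_form P (closed_loop A B K \<sigma> *v z) \<le> \<gamma>\<^sup>2 * quad_form P z \<and>
    cos (cap_delta_inv TYPE('n) \<epsilon>) \<le> \<bar>z \<bullet> x\<bar>"
proof -
  obtain z where "z \<in> unit_sphere" "(z, \<sigma>) \<in> \<omega>" "cos (cap_delta_inv TYPE('n) \<epsilon>) \<le> \<bar>z \<bullet> x\<bar>"
    using assms(1,3,4) unfolding eps_covering_def unit_sphere_def by blast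
  then show ?thesis
    using feasK_contraction[OF assms(2)] unfolding unit_sphere_def by blast
qed

lemma algorithm1_output_feasible:
  assumes "algorithm1_output \<omega> A B tol \<gamma> P K"
  shows "psd_ge_I P" "feasK \<omega> A B P \<gamma> K"
proof -
  obtain Ps Ks gs k hs where "optP \<omega> A B (Ks k) (hs k) (Ps (Suc k))"
    "optK \<omega> A B (Ps (Suc k)) (gs (Suc k)) (Ks (Suc k))"
    "\<gamma> = gs (Suc k)" "P = Ps (Suc k)" "K = Ks (Suc k)"
    using assms unfolding algorithm1_output_def by blast
  then show "psd_ge_I P" "feasK \<omega> A B P \<gamma> K"
    unfolding optP_def feasP_def optK_def by auto
qed

theorem lemma3:
  fixes A :: "nat \<Rightarrow> real^'n^'n" and B :: "real^'m^'n"
    and M N :: nat and \<omega> :: "((real^'n) \<times> nat) set"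
    and tol \<epsilon> \<gamma> :: real and P :: "real^'n^'n" and K :: "real^'n^'m"
  assumes "M \<ge> 1" and "N \<ge> 1"
    and "\<omega> \<subseteq> unit_sphere \<times> {1..M}" and "finite \<omega>" and "card \<omega> = N"
    and "tol > 0"
    and "algorithm1_output \<omega> A B tol \<gamma> P K"
    and "0 < \<epsilon>" and "\<epsilon> < 1"
    and "eps_covering \<omega> M \<epsilon>"
  shows "ereal (jsr M (closed_loop A B K)) \<le>
    (if kappa P * (1 - cos (cap_delta_inv TYPE('n) \<epsilon>)) \<ge> 1 then \<infinity>
     else ereal (\<gamma> / (1 - kappa P * (1 - cos (cap_delta_inv TYPE('n) \<epsilon>)))))"
proof (cases "kappa P * (1 - cos (cap_delta_inv TYPE('n) \<epsilon>)) \<ge> 1")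
  case False
  define c where "c = cos (cap_delta_inv TYPE('n) \<epsilon>)"
  define R where "R = \<gamma> / (1 - kappa P * (1 - c))"
  have D: "0 < 1 - kappa P * (1 - c)"
    using False unfolding c_def by simp
  have P: "psd_ge_I P" and feas: "feasK \<omega> A B P \<gamma> K"
    using algorithm1_output_feasible[OF assms(7)] by auto
  have "0 \<le> R"
    using feas D unfolding R_def feasK_def by simp
  have "quad_form P (closed_loop A B K \<sigma> *v y) \<le> R\<^sup>2 * quad_form P y" if "\<sigma> \<in> {1..M}" for \<sigma> y
    unfolding R_def
    using eps_covering_feasK_contracted_point[OF assms(10) feas that] D
    by (intro quad_form_contraction_of_covering[OF P]) (auto simp: c_def)
  then have "jsr M (closed_loop A B K) \<le> R"
    by (intro jsr_le_of_quad_form_contraction[OF assms(1) P \<open>0 \<le> R\<close>])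
  then show ?thesis
    using False unfolding R_def c_def by simp
qed simp

end
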